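(* For every real $p\geq 0$ and every integer $n\geq 2$, $$\sum_{k=1}^{n-1}\frac{\bar B_{2k}\bar B_{2n-2k}}{(2k)(2n-2k)}\,\frac{\Gamma(2k+p)\Gamma(2n-2k+p)}{\Gamma(2k)\Gamma(2n-2k)}=2\Gamma(p+1)\sum_{k=1}^{n}\frac{B_{2k}\bar B_{2n-2k}}{(2k)!\,(2n-2k)!}\,\frac{\Gamma(2k+p)\Gamma(2n+2p)}{\Gamma(2p+2k+1)}+2\,\frac{\bar B_{2n}\Gamma(2n+2p)}{(2n)!}\sum_{k=1}^{2n-1}\beta(p+k,p+1).$$
   Context: $B_n$ denotes the Bernoulli numbers, defined by $\frac{x}{e^x-1}=\sum_{n\ge 0}B_n\frac{x^n}{n!}$ (so $B_0=1$). $\bar B_n:=\frac{1-2^{n-1}}{2^{n-1}}B_n$ (so $\bar B_0=1$). $\Gamma$ is the Gamma function and $\beta(a,b)=\frac{\Gamma(a)\Gamma(b)}{\Gamma(a+b)}$ is the Euler beta function. *)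

theory Defs
  imports "HOL-Analysis.Analysis" "HOL-Computational_Algebra.Formal_Power_Series"
begin

text \<open>Bernoulli numbers via the exponential generating function x/(e^x - 1) = sum B_n x^n/n!
  (so B_0 = 1, B_1 = -1/2), as a formal power series.\<close>
definition bernoulli :: "nat \<Rightarrow> real" where
  "bernoulli n = fact n * fps_nth (fps_X / (fps_exp 1 - 1)) n"

text \<open>Bbar_n = (1 - 2^(n-1)) / 2^(n-1) * B_n, with real exponent n-1 (so Bbar_0 = 1).\<close>
definition bernoulli_bar :: "nat \<Rightarrow> real" where
  "bernoulli_bar n = (1 - 2 powr (real n - 1)) / 2 powr (real n - 1) * bernoulli n"

end

theory Submission
  imports Defs
begin

(* Let H(x) = x / (2 sinh (x/2)), whose coefficients are Bbar_m / m!, and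
   K(x) = (x/2) coth (x/2), whose coefficients are B_m / m! for m <> 1 (and 0 for m = 1).
   The addition formula for coth gives, whenever u + v = 1,
     H(u x) H(v x) = v K(u x) H(x) + u K(v x) H(x).
   Both series are even, so comparing coefficients of x^(2n) with u = t, v = 1 - t yields a
   polynomial identity in t. Integrating it against t^(p-1) (1-t)^(p-1) over (0,1) turns every
   monomial t^a (1-t)^b into Beta(a+p, b+p), and Gamma a * Gamma b = Gamma (a+b) * Beta a b
   converts the result into the stated Gamma form. *)

abbreviation fps_dilate :: "'a::comm_ring_1 \<Rightarrow> 'a fps \<Rightarrow> 'a fps" where
  "fps_dilate c f \<equiv> f oo (fps_const c * fps_X)"

definition bernoulli_fps :: "'a::field_char_0 fps" where
  "bernoulli_fps = fps_X / (fps_exp 1 - 1)"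

(* x / (2 sinh (x/2)) *)
definition bernoulli_bar_fps :: "'a::field_char_0 fps" where
  "bernoulli_bar_fps = bernoulli_fps * fps_exp (1/2)"

(* (x/2) coth (x/2) *)
definition bernoulli_coth_fps :: "'a::field_char_0 fps" where
  "bernoulli_coth_fps = bernoulli_fps + fps_const (1/2) * fps_X"

lemma fps_exp_minus_1_nonzero:
  assumes "c \<noteq> 0"
  shows "fps_exp c - 1 \<noteq> (0 :: 'a::field_char_0 fps)"
proof
  assume "fps_exp c - 1 = (0 :: 'a fps)"
  then have "fps_nth (fps_exp c - 1 :: 'a fps) 1 = 0" by simp
  with assms show False by simp
qed

lemma fps_dilate_mult:
  "fps_dilate c (f * g) = fps_dilate c f * fps_dilate (c::'a::idom) g"
  by (simp add: fps_compose_mult_distrib)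

lemma fps_dilate_mult_exp_minus_1:
  "fps_dilate c (f * (fps_exp 1 - 1)) = fps_dilate c f * (fps_exp c - 1 :: 'a::field_char_0 fps)"
  by (simp add: fps_dilate_mult fps_compose_sub_distrib)

lemma bernoulli_fps_mult_exp_minus_1:
  "bernoulli_fps * (fps_exp 1 - 1) = (fps_X :: 'a::field_char_0 fps)"
  unfolding bernoulli_fps_def
proof (rule fps_times_divide_eq)
  show "fps_exp 1 - 1 \<noteq> (0 :: 'a fps)" by (rule fps_exp_minus_1_nonzero) simp
  show "subdegree (fps_exp 1 - 1 :: 'a fps) \<le> subdegree (fps_X :: 'a fps)"
    by (rule subdegree_leI) simp
qed

lemma bernoulli_fps_dilate_mult_exp_minus_1:
  "fps_dilate c bernoulli_fps * (fps_exp c - 1) = fps_const c * (fps_X :: 'a::field_char_0 fps)"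
  by (simp only: bernoulli_fps_mult_exp_minus_1 flip: fps_dilate_mult_exp_minus_1) simp

lemma bernoulli_bar_fps_mult_exp_minus_1:
  "bernoulli_bar_fps * (fps_exp 1 - 1) = fps_X * fps_exp (1/2 :: 'a::field_char_0)"
proof -
  have "bernoulli_bar_fps * (fps_exp 1 - 1) = bernoulli_fps * (fps_exp 1 - 1) * fps_exp (1/2 :: 'a)"
    by (simp only: bernoulli_bar_fps_def ac_simps)
  then show ?thesis by (simp only: bernoulli_fps_mult_exp_minus_1)
qed

lemma bernoulli_bar_fps_dilate_mult_exp_minus_1:
  "fps_dilate c bernoulli_bar_fps * (fps_exp c - 1)
     = fps_const c * fps_X * fps_exp (c/2 :: 'a::field_char_0)"
proof -
  have "fps_dilate c bernoulli_bar_fps * (fps_exp c - 1) = fps_dilate c (fps_X * fps_exp (1/2))"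
    by (simp only: bernoulli_bar_fps_mult_exp_minus_1 flip: fps_dilate_mult_exp_minus_1)
  also have "\<dots> = fps_const c * fps_X * fps_exp (c * (1/2))"
    by (simp only: fps_dilate_mult fps_exp_compose_linear) simp
  finally show ?thesis by simp
qed

lemma bernoulli_coth_fps_mult_exp_minus_1:
  "bernoulli_coth_fps * (fps_exp 1 - 1) = fps_const (1/2) * fps_X * (fps_exp 1 + 1 :: 'a::field_char_0 fps)"
proof -
  have half: "fps_const (1/2) + fps_const (1/2) = (1 :: 'a fps)"
    by simp
  have "bernoulli_coth_fps * (fps_exp 1 - 1)
      = fps_X + fps_const (1/2) * fps_X * (fps_exp 1 - 1 :: 'a fps)"
    by (simp add: bernoulli_coth_fps_def distrib_right bernoulli_fps_mult_exp_minus_1)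
  also have "\<dots> = fps_const (1/2) * fps_X * (fps_exp 1 + 1)"
    using half by algebra
  finally show ?thesis .
qed

lemma bernoulli_coth_fps_dilate_mult_exp_minus_1:
  "fps_dilate c bernoulli_coth_fps * (fps_exp c - 1)
     = fps_const (c/2) * fps_X * (fps_exp c + 1 :: 'a::field_char_0 fps)"
proof -
  have "fps_dilate c bernoulli_coth_fps * (fps_exp c - 1)
      = fps_dilate c (fps_const (1/2) * fps_X * (fps_exp 1 + 1))"
    by (simp only: bernoulli_coth_fps_mult_exp_minus_1 flip: fps_dilate_mult_exp_minus_1)
  also have "\<dots> = fps_const (1/2) * (fps_const c * fps_X) * (fps_exp c + 1)"
    by (simp add: fps_dilate_mult fps_compose_add_distrib)
  also have "\<dots> = fps_const (c/2) * fps_X * (fps_exp c + 1)"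
    by (simp only: mult.assoc[symmetric] fps_const_mult) simp
  finally show ?thesis .
qed

lemma bernoulli_bar_fps_dilate_product:
  fixes u v :: "'a::field_char_0"
  assumes "u \<noteq> 0" "v \<noteq> 0" "u + v = 1"
  shows "fps_dilate u bernoulli_bar_fps * fps_dilate v bernoulli_bar_fps
       = fps_const v * (fps_dilate u bernoulli_coth_fps * bernoulli_bar_fps)
         + fps_const u * (fps_dilate v bernoulli_coth_fps * bernoulli_bar_fps)"
proof -
  let ?N = "(fps_exp u - 1) * (fps_exp v - 1) * (fps_exp 1 - 1 :: 'a fps)"
  have "?N \<noteq> 0"
    using assms by (simp add: fps_exp_minus_1_nonzero)
  have exp_1: "fps_exp 1 = fps_exp u * fps_exp (v :: 'a)"
    using assms(3) by (simp flip: fps_exp_add_mult)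
  have exp_half: "fps_exp (1/2) = fps_exp (u/2) * fps_exp (v/2 :: 'a)"
    using assms(3) by (simp flip: fps_exp_add_mult add: add_divide_distrib [symmetric])
  have const_u: "fps_const u = fps_const (u/2) + fps_const (u/2)"
    and const_v: "fps_const v = fps_const (v/2) + fps_const (v/2)"
    by simp_all
  \<comment> \<open>multiplied by ?N, both sides become u v x^2 e^(x/2) (e^x - 1)\<close>
  have "fps_dilate u bernoulli_bar_fps * fps_dilate v bernoulli_bar_fps * ?N
       = (fps_const v * (fps_dilate u bernoulli_coth_fps * bernoulli_bar_fps)
          + fps_const u * (fps_dilate v bernoulli_coth_fps * bernoulli_bar_fps)) * ?N"
    using bernoulli_bar_fps_dilate_mult_exp_minus_1 [of u] bernoulli_bar_fps_dilate_mult_exp_minus_1 [of v]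
      bernoulli_coth_fps_dilate_mult_exp_minus_1 [of u] bernoulli_coth_fps_dilate_mult_exp_minus_1 [of v]
      bernoulli_bar_fps_mult_exp_minus_1 [where 'a = 'a] exp_1 exp_half const_u const_v
    by algebra
  with \<open>?N \<noteq> 0\<close> show ?thesis by simp
qed

lemma fps_nth_odd_eq_0_if_even:
  assumes "fps_dilate (-1) f = (f :: 'a::field_char_0 fps)" and "odd n"
  shows "fps_nth f n = 0"
proof -
  have "(-1) ^ n * fps_nth f n = fps_nth f n"
    using arg_cong [where f = "\<lambda>g. fps_nth g n", OF assms(1)] by simp
  with assms(2) show ?thesis by simp
qed

lemma bernoulli_bar_fps_even:
  "fps_dilate (-1) bernoulli_bar_fps = (bernoulli_bar_fps :: 'a::field_char_0 fps)"
proof -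
  have "fps_exp 1 - 1 \<noteq> (0 :: 'a fps)"
    by (simp add: fps_exp_minus_1_nonzero)
  moreover have "fps_dilate (-1) bernoulli_bar_fps * (fps_exp 1 - 1)
      = bernoulli_bar_fps * (fps_exp 1 - 1 :: 'a fps)"
  proof -
    have "fps_exp (-1) * fps_exp 1 = (1 :: 'a fps)"
      and "fps_exp (-1/2) * fps_exp 1 = (fps_exp (1/2) :: 'a fps)"
      and "fps_const (-1) = (-1 :: 'a fps)"
      by (simp_all flip: fps_exp_add_mult)
    then show ?thesis
      using bernoulli_bar_fps_dilate_mult_exp_minus_1 [of "-1 :: 'a"]
        bernoulli_bar_fps_mult_exp_minus_1 [where 'a = 'a]
      by algebra
  qed
  ultimately show ?thesis by simp
qed

lemma bernoulli_coth_fps_even: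
  "fps_dilate (-1) bernoulli_coth_fps = (bernoulli_coth_fps :: 'a::field_char_0 fps)"
proof -
  have "fps_exp 1 - 1 \<noteq> (0 :: 'a fps)"
    by (simp add: fps_exp_minus_1_nonzero)
  moreover have "fps_dilate (-1) bernoulli_coth_fps * (fps_exp 1 - 1)
      = bernoulli_coth_fps * (fps_exp 1 - 1 :: 'a fps)"
  proof -
    have "fps_exp (-1) * fps_exp 1 = (1 :: 'a fps)"
      by (simp flip: fps_exp_add_mult)
    moreover have "fps_const (-1/2) = - fps_const (1/2 :: 'a)"
      by simp
    ultimately show ?thesis
      using bernoulli_coth_fps_dilate_mult_exp_minus_1 [of "-1 :: 'a"]
        bernoulli_coth_fps_mult_exp_minus_1 [where 'a = 'a]
      by algebra
  qed
  ultimately show ?thesis by simp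
qed

lemma bernoulli_fps_0: "fps_nth bernoulli_fps 0 = (1 :: 'a::field_char_0)"
proof -
  have "fps_nth (bernoulli_fps * (fps_exp 1 - 1)) 1 = (1 :: 'a)"
    by (simp add: bernoulli_fps_mult_exp_minus_1)
  then show ?thesis by (simp add: fps_mult_nth_1)
qed

lemma bernoulli_bar_fps_conv_bernoulli_fps:
  "bernoulli_bar_fps = fps_const 2 * fps_dilate (1/2) bernoulli_fps - (bernoulli_fps :: 'a::field_char_0 fps)"
proof -
  have "fps_exp 1 - 1 \<noteq> (0 :: 'a fps)"
    by (simp add: fps_exp_minus_1_nonzero)
  moreover have "bernoulli_bar_fps * (fps_exp 1 - 1)
      = (fps_const 2 * fps_dilate (1/2) bernoulli_fps - bernoulli_fps) * (fps_exp 1 - 1 :: 'a fps)"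
  proof -
    have "fps_exp 1 = fps_exp (1/2) * (fps_exp (1/2) :: 'a fps)"
      and "fps_const 2 * fps_const (1/2) = (1 :: 'a fps)"
      by (simp_all flip: fps_exp_add_mult)
    then show ?thesis
      using bernoulli_fps_dilate_mult_exp_minus_1 [of "1/2 :: 'a"]
        bernoulli_fps_mult_exp_minus_1 [where 'a = 'a] bernoulli_bar_fps_mult_exp_minus_1 [where 'a = 'a]
      by algebra
  qed
  ultimately show ?thesis by simp
qed

lemma bernoulli_bar_fps_nth: "fps_nth bernoulli_bar_fps n = bernoulli_bar n / fact n"
proof -
  have "(2::real) powr (real n - 1) = 2 ^ n / 2"
    by (simp add: powr_diff powr_realpow)
  then have "(1 - 2 powr (real n - 1)) / 2 powr (real n - 1) = 2 * (1/2) ^ n - (1::real)"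
    by (simp add: field_simps power_one_over)
  moreover have "fps_nth bernoulli_bar_fps n = (2 * (1/2) ^ n - 1) * fps_nth (bernoulli_fps :: real fps) n"
    by (simp add: bernoulli_bar_fps_conv_bernoulli_fps left_diff_distrib)
  ultimately show ?thesis
    by (simp add: bernoulli_bar_def bernoulli_def bernoulli_fps_def [symmetric])
qed

lemma bernoulli_coth_fps_nth:
  "n \<noteq> 1 \<Longrightarrow> fps_nth bernoulli_coth_fps n = bernoulli n / fact n"
  by (simp add: bernoulli_coth_fps_def bernoulli_def bernoulli_fps_def)

lemma bernoulli_0: "bernoulli 0 = 1"
  using bernoulli_coth_fps_nth [of 0] by (simp add: bernoulli_coth_fps_def bernoulli_fps_0)

lemma bernoulli_bar_0: "bernoulli_bar 0 = 1"
  using bernoulli_0 by (simp add: bernoulli_bar_def)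

lemma sum_even_indices:
  fixes f :: "nat \<Rightarrow> 'a::comm_monoid_add"
  assumes "\<And>i. odd i \<Longrightarrow> f i = 0"
  shows "(\<Sum>i=0..2*n. f i) = (\<Sum>k=0..n. f (2*k))"
proof (induction n)
  case (Suc n)
  have "(\<Sum>i=0..2 * Suc n. f i) = (\<Sum>i=0..2*n. f i) + f (2*n + 1) + f (2*n + 2)"
    by (simp add: numeral_2_eq_2)
  with Suc.IH assms show ?case by simp
qed simp

lemma bernoulli_bar_fps_coeff_identity:
  fixes u v :: "'a::field_char_0"
  assumes "u \<noteq> 0" "v \<noteq> 0" "u + v = 1"
  shows "(\<Sum>k=0..n. u^(2*k) * v^(2*n-2*k)
            * (fps_nth bernoulli_bar_fps (2*k) * fps_nth bernoulli_bar_fps (2*n-2*k)))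
       = (\<Sum>k=0..n. (v * u^(2*k) + u * v^(2*k))
            * (fps_nth bernoulli_coth_fps (2*k) * fps_nth bernoulli_bar_fps (2*n-2*k)))"
proof -
  let ?H = "fps_nth (bernoulli_bar_fps :: 'a fps)" and ?K = "fps_nth (bernoulli_coth_fps :: 'a fps)"
  let ?F = "\<lambda>i. (u^i * ?H i) * (v^(2*n-i) * ?H (2*n-i))"
  let ?A = "\<lambda>i. (u^i * ?K i) * ?H (2*n-i)" and ?B = "\<lambda>i. (v^i * ?K i) * ?H (2*n-i)"
  have "(\<Sum>k=0..n. u^(2*k) * v^(2*n-2*k) * (?H (2*k) * ?H (2*n-2*k))) = (\<Sum>k=0..n. ?F (2*k))"
    by (intro sum.cong) (simp_all add: ac_simps)
  also have "\<dots> = (\<Sum>i=0..2*n. ?F i)"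
    by (rule sum_even_indices [symmetric]) (simp add: fps_nth_odd_eq_0_if_even [OF bernoulli_bar_fps_even])
  also have "\<dots> = v * (\<Sum>i=0..2*n. ?A i) + u * (\<Sum>i=0..2*n. ?B i)"
    using arg_cong [where f = "\<lambda>g. fps_nth g (2*n)", OF bernoulli_bar_fps_dilate_product [OF assms]]
    by (simp only: fps_add_nth fps_mult_left_const_nth) (simp only: fps_mult_nth fps_nth_compose_linear)
  also have "\<dots> = v * (\<Sum>k=0..n. ?A (2*k)) + u * (\<Sum>k=0..n. ?B (2*k))"
    by (subst (1 2) sum_even_indices) (simp_all add: fps_nth_odd_eq_0_if_even [OF bernoulli_coth_fps_even])
  also have "\<dots> = (\<Sum>k=0..n. (v * u^(2*k) + u * v^(2*k)) * (?K (2*k) * ?H (2*n-2*k)))"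
    by (simp only: sum_distrib_left sum.distrib [symmetric]) (intro sum.cong refl, simp add: algebra_simps)
  finally show ?thesis .
qed

lemma sum_power_mult_complement:
  fixes t :: "'a::comm_ring_1"
  shows "(\<Sum>k=1..m. t^k * (1-t)^1) + (\<Sum>k=1..m. t^1 * (1-t)^k) = 1 - t^(Suc m) - (1-t)^(Suc m)"
  by (induction m) (simp_all add: algebra_simps)

(* The exponents 1 are kept so that every term is a monomial t^a (1-t)^b for has_integral_Beta_sum. *)
lemma bernoulli_bar_polynomial_identity:
  fixes t :: real
  assumes "t \<noteq> 0" "t \<noteq> 1" "n \<ge> 1"
  shows "(\<Sum>k=1..n-1. bernoulli_bar (2*k) * bernoulli_bar (2*n-2*k) / (fact (2*k) * fact (2*n-2*k))
            * (t^(2*k) * (1-t)^(2*n-2*k)))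
       = (\<Sum>k=1..n. bernoulli (2*k) * bernoulli_bar (2*n-2*k) / (fact (2*k) * fact (2*n-2*k))
            * (t^(2*k) * (1-t)^1))
       + (\<Sum>k=1..n. bernoulli (2*k) * bernoulli_bar (2*n-2*k) / (fact (2*k) * fact (2*n-2*k))
            * (t^1 * (1-t)^(2*k)))
       + (\<Sum>k=1..2*n-1. bernoulli_bar (2*n) / fact (2*n) * (t^k * (1-t)^1))
       + (\<Sum>k=1..2*n-1. bernoulli_bar (2*n) / fact (2*n) * (t^1 * (1-t)^k))"
proof -
  define h where "h = bernoulli_bar (2*n) / fact (2*n)"
  define c where "c k = bernoulli (2*k) * bernoulli_bar (2*n-2*k) / (fact (2*k) * fact (2*n-2*k))" for k
  define d where "d k = bernoulli_bar (2*k) * bernoulli_bar (2*n-2*k) / (fact (2*k) * fact (2*n-2*k))" for k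
  let ?f = "\<lambda>k. d k * (t^(2*k) * (1-t)^(2*n-2*k))"
  let ?g = "\<lambda>k. c k * ((1-t) * t^(2*k) + t * (1-t)^(2*k))"
  obtain m where n: "n = Suc m"
    using assms(3) by (cases n) auto
  have "(\<Sum>k=0..n. ?f k) = (\<Sum>k=0..n. ?g k)"
    using bernoulli_bar_fps_coeff_identity [of t "1-t" n] assms(1,2)
    by (simp add: c_def d_def bernoulli_bar_fps_nth bernoulli_coth_fps_nth algebra_simps)
  moreover have "(\<Sum>k=0..n. ?f k) = h * (1-t)^(2*n) + (\<Sum>k=1..n-1. ?f k) + h * t^(2*n)"
    by (simp add: n sum.atLeast_Suc_atMost d_def h_def bernoulli_bar_0)
  moreover have "(\<Sum>k=0..n. ?g k) = h + (\<Sum>k=1..n. ?g k)"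
    by (simp add: sum.atLeast_Suc_atMost c_def h_def bernoulli_0)
  moreover have "(\<Sum>k=1..n. ?g k)
      = (\<Sum>k=1..n. c k * (t^(2*k) * (1-t)^1)) + (\<Sum>k=1..n. c k * (t^1 * (1-t)^(2*k)))"
    by (simp only: sum.distrib [symmetric]) (intro sum.cong refl, simp add: algebra_simps)
  moreover have "(\<Sum>k=1..2*n-1. h * (t^k * (1-t)^1)) + (\<Sum>k=1..2*n-1. h * (t^1 * (1-t)^k))
      = h - h * t^(2*n) - h * (1-t)^(2*n)"
  proof -
    have geometric: "(\<Sum>k=1..2*n-1. t^k * (1-t)^1) + (\<Sum>k=1..2*n-1. t^1 * (1-t)^k)
        = 1 - t^(2*n) - (1-t)^(2*n)"
      using sum_power_mult_complement [of t "2*n-1"] assms(3) by simp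
    have "(\<Sum>k=1..2*n-1. h * (t^k * (1-t)^1)) + (\<Sum>k=1..2*n-1. h * (t^1 * (1-t)^k))
        = h * ((\<Sum>k=1..2*n-1. t^k * (1-t)^1) + (\<Sum>k=1..2*n-1. t^1 * (1-t)^k))"
      by (simp only: sum_distrib_left distrib_left)
    also have "\<dots> = h - h * t^(2*n) - h * (1-t)^(2*n)"
      unfolding geometric by (simp add: algebra_simps)
    finally show ?thesis .
  qed
  ultimately show ?thesis
    unfolding h_def [symmetric] c_def [symmetric] d_def [symmetric] by linarith
qed

lemma has_integral_Beta_monomial:
  fixes p :: real
  assumes "real a + p > 0" "real b + p > 0"
  shows "((\<lambda>t. t^a * (1-t)^b * (t powr (p-1) * (1-t) powr (p-1)))
           has_integral Beta (real a + p) (real b + p)) {0<..<1}"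
proof -
  have powr_split: "x powr (real m + p - 1) = x^m * x powr (p-1)" if "x > 0" for x :: real and m
    using that by (simp add: powr_add [symmetric] powr_realpow [symmetric] add_diff_eq)
  have pointwise: "t powr (real a + p - 1) * (1-t) powr (real b + p - 1)
      = t^a * (1-t)^b * (t powr (p-1) * (1-t) powr (p-1))" if "t \<in> {0<..<1}" for t
    using that by (simp add: powr_split)
  have Beta: "((\<lambda>t. t powr (real a + p - 1) * (1-t) powr (real b + p - 1))
          has_integral Beta (real a + p) (real b + p)) {0<..<1}"
    using has_integral_Beta_real [OF assms] by (simp add: has_integral_Icc_iff_Ioo)
  show ?thesis
    by (rule has_integral_cong [THEN iffD1, OF pointwise Beta])
qed

lemma has_integral_Beta_sum:
  fixes p :: real and c :: "'i \<Rightarrow> real"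
  assumes "finite A" and "\<And>i. i \<in> A \<Longrightarrow> real (a i) + p > 0 \<and> real (b i) + p > 0"
  shows "((\<lambda>t. (\<Sum>i\<in>A. c i * (t^(a i) * (1-t)^(b i))) * (t powr (p-1) * (1-t) powr (p-1)))
           has_integral (\<Sum>i\<in>A. c i * Beta (real (a i) + p) (real (b i) + p))) {0<..<1}"
proof -
  have "((\<lambda>t. \<Sum>i\<in>A. c i * (t^(a i) * (1-t)^(b i) * (t powr (p-1) * (1-t) powr (p-1))))
           has_integral (\<Sum>i\<in>A. c i * Beta (real (a i) + p) (real (b i) + p))) {0<..<1}"
    using assms by (intro has_integral_sum has_integral_mult_right has_integral_Beta_monomial) auto
  then show ?thesis
    by (simp only: sum_distrib_right mult.assoc)
qed

lemma bernoulli_bar_Beta_identity: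
  fixes p :: real
  assumes "p > -1" "n \<ge> 1"
  shows "(\<Sum>k=1..n-1. bernoulli_bar (2*k) * bernoulli_bar (2*n-2*k) / (fact (2*k) * fact (2*n-2*k))
            * Beta (real (2*k) + p) (real (2*n-2*k) + p))
       = 2 * (\<Sum>k=1..n. bernoulli (2*k) * bernoulli_bar (2*n-2*k) / (fact (2*k) * fact (2*n-2*k))
            * Beta (real (2*k) + p) (p + 1))
       + 2 * (bernoulli_bar (2*n) / fact (2*n)) * (\<Sum>k=1..2*n-1. Beta (p + real k) (p + 1))"
proof -
  define h where "h = bernoulli_bar (2*n) / fact (2*n)"
  define c where "c k = bernoulli (2*k) * bernoulli_bar (2*n-2*k) / (fact (2*k) * fact (2*n-2*k))" for k
  define d where "d k = bernoulli_bar (2*k) * bernoulli_bar (2*n-2*k) / (fact (2*k) * fact (2*n-2*k))" for k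
  let ?V = "(\<Sum>k=1..n. c k * Beta (real (2*k) + p) (real 1 + p))
            + (\<Sum>k=1..n. c k * Beta (real 1 + p) (real (2*k) + p))
            + (\<Sum>k=1..2*n-1. h * Beta (real k + p) (real 1 + p))
            + (\<Sum>k=1..2*n-1. h * Beta (real 1 + p) (real k + p))"
  let ?w = "\<lambda>t::real. t powr (p-1) * (1-t) powr (p-1)"
  let ?P1 = "\<lambda>t. \<Sum>k=1..n. c k * (t^(2*k) * (1-t)^1)"
  let ?P2 = "\<lambda>t. \<Sum>k=1..n. c k * (t^1 * (1-t)^(2*k))"
  let ?P3 = "\<lambda>t. \<Sum>k=1..2*n-1. h * (t^k * (1-t)^1)"
  let ?P4 = "\<lambda>t. \<Sum>k=1..2*n-1. h * (t^1 * (1-t)^k)"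
  have "((\<lambda>t. (\<Sum>k=1..n-1. d k * (t^(2*k) * (1-t)^(2*n-2*k))) * ?w t)
          has_integral (\<Sum>k=1..n-1. d k * Beta (real (2*k) + p) (real (2*n-2*k) + p))) {0<..<1}"
    using assms(1) by (intro has_integral_Beta_sum) auto
  moreover have "((\<lambda>t. (\<Sum>k=1..n-1. d k * (t^(2*k) * (1-t)^(2*n-2*k))) * ?w t)
          has_integral ?V) {0<..<1}"
  proof (rule has_integral_cong [THEN iffD2])
    show "(\<Sum>k=1..n-1. d k * (t^(2*k) * (1-t)^(2*n-2*k))) * ?w t
        = ?P1 t * ?w t + ?P2 t * ?w t + ?P3 t * ?w t + ?P4 t * ?w t" if "t \<in> {0<..<1}" for t
      using bernoulli_bar_polynomial_identity [of t n] that assms(2)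
      unfolding h_def [symmetric] c_def [symmetric] d_def [symmetric] by (simp add: distrib_right)
    show "((\<lambda>t. ?P1 t * ?w t + ?P2 t * ?w t + ?P3 t * ?w t + ?P4 t * ?w t)
          has_integral ?V) {0<..<1}"
      using assms(1) by (intro has_integral_add has_integral_Beta_sum) auto
  qed
  ultimately have "(\<Sum>k=1..n-1. d k * Beta (real (2*k) + p) (real (2*n-2*k) + p)) = ?V"
    by (rule has_integral_unique)
  then show ?thesis
    unfolding h_def [symmetric] c_def [symmetric] d_def [symmetric]
    by (simp add: Beta_commute [of "1 + p"] add.commute sum_distrib_left mult.assoc)
qed

lemma fact_eq_of_nat_mult_Gamma: "m \<ge> 1 \<Longrightarrow> (fact m :: real) = real m * Gamma (real m)"
  using Gamma_fact [of "m - 1", where 'a = real] by (cases m) (simp_all add: add.commute)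

lemma Gamma_quotient_eq_Beta:
  fixes p x :: real
  assumes "a \<ge> 1" "b \<ge> 1" "a + b = m" "p > -1"
  shows "x / (real a * real b)
           * (Gamma (real a + p) * Gamma (real b + p) / (Gamma (real a) * Gamma (real b)))
       = Gamma (real m + 2*p) * (x / (fact a * fact b) * Beta (real a + p) (real b + p))"
proof -
  have arg: "real a + p + (real b + p) = real m + 2*p"
    using assms(3) by (simp flip: of_nat_add)
  have "Gamma (real m + 2*p) > 0"
    using assms by simp
  then show ?thesis
    unfolding Beta_def arg using assms(1,2) by (simp add: fact_eq_of_nat_mult_Gamma)
qed

theorem theorem4p2:
  fixes p :: real and n :: nat
  assumes "p \<ge> 0" and "n \<ge> 2"
  shows "(\<Sum>k=1..n-1. bernoulli_bar (2*k) * bernoulli_bar (2*n-2*k) / (real (2*k) * real (2*n-2*k))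
            * (Gamma (real (2*k) + p) * Gamma (real (2*n-2*k) + p) / (Gamma (real (2*k)) * Gamma (real (2*n-2*k)))))
       = 2 * Gamma (p + 1) * (\<Sum>k=1..n. bernoulli (2*k) * bernoulli_bar (2*n-2*k) / (fact (2*k) * fact (2*n-2*k))
            * (Gamma (real (2*k) + p) * Gamma (real (2*n) + 2*p) / Gamma (2*p + real (2*k) + 1)))
         + 2 * (bernoulli_bar (2*n) * Gamma (real (2*n) + 2*p) / fact (2*n))
             * (\<Sum>k=1..2*n-1. Beta (p + real k) (p + 1))"
proof -
  have p: "p > -1" "n \<ge> 1"
    using assms by auto
  define G where "G = Gamma (real (2*n) + 2*p)"
  have "G * (\<Sum>k=1..n. bernoulli (2*k) * bernoulli_bar (2*n-2*k) / (fact (2*k) * fact (2*n-2*k))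
            * Beta (real (2*k) + p) (p + 1))
      = Gamma (p + 1) * (\<Sum>k=1..n. bernoulli (2*k) * bernoulli_bar (2*n-2*k) / (fact (2*k) * fact (2*n-2*k))
            * (Gamma (real (2*k) + p) * Gamma (real (2*n) + 2*p) / Gamma (2*p + real (2*k) + 1)))"
    unfolding sum_distrib_left G_def by (intro sum.cong refl) (simp add: Beta_def algebra_simps)
  moreover have "(\<Sum>k=1..n-1. bernoulli_bar (2*k) * bernoulli_bar (2*n-2*k) / (real (2*k) * real (2*n-2*k))
            * (Gamma (real (2*k) + p) * Gamma (real (2*n-2*k) + p)
               / (Gamma (real (2*k)) * Gamma (real (2*n-2*k)))))
      = G * (\<Sum>k=1..n-1. bernoulli_bar (2*k) * bernoulli_bar (2*n-2*k) / (fact (2*k) * fact (2*n-2*k))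
            * Beta (real (2*k) + p) (real (2*n-2*k) + p))"
    unfolding sum_distrib_left G_def using p by (intro sum.cong refl Gamma_quotient_eq_Beta) auto
  ultimately show ?thesis
    unfolding bernoulli_bar_Beta_identity [OF p] G_def by (simp add: algebra_simps)
qed

end
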